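(* $\mathbf{K}^{\nabla\bullet}$ is sound and strongly complete with respect to the class of serial frames: for every set $\Gamma\cup\{\phi\}\subseteq\mathcal{L}(\nabla,\bullet)$, $\Gamma\vdash_{\mathbf{K}^{\nabla\bullet}}\phi$ iff for every Kripke model $\mathcal{M}$ with serial accessibility relation and every state $s$, if $\mathcal{M},s\vDash\Gamma$ then $\mathcal{M},s\vDash\phi$.
   Context: $\mathcal{L}(\nabla,\bullet)$: $\phi::=p\mid\neg\phi\mid\phi\land\phi\mid\nabla\phi\mid\bullet\phi$ over a nonempty set $\mathbf{P}$ of propositional variables; $\Delta\phi:=\neg\nabla\phi$, $\circ\phi:=\neg\bullet\phi$. Kripke models $\langle S,R,V\rangle$: $s\vDash\nabla\phi$ iff there are $t,u$ with $sRt$, $sRu$, $t\vDash\phi$, $u\nvDash\phi$; $s\vDash\bullet\phi$ iff $s\vDash\phi$ and there is $t$ with $sRt$, $t\nvDash\phi$. $R$ is serial if every state has an $R$-successor. The Hilbert system $\mathbf{K}^{\nabla\bullet}$ has axioms: A0 all propositional tautologies; A1 $\bullet\phi\to\phi$; A2 $\nabla\phi\leftrightarrow\nabla\neg\phi$; A3 $\bullet(\psi\to\phi)\land\phi\to\bullet\phi$; A4 $\nabla(\phi\land\psi)\to\nabla\phi\vee\nabla\psi$; A5 $\bullet(\phi\land\psi)\to\bullet\phi\vee\bullet\psi$; A6 $\nabla\phi\to\bullet\phi\vee\bullet\neg\phi$; A7 $\bullet(\phi\to\psi)\land\bullet(\neg\phi\to\chi)\to\nabla\phi$; rules R1 $\phi/\Delta\phi$;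 R2 $\phi/\circ\phi$; R3 $\phi\leftrightarrow\psi/\Delta\phi\leftrightarrow\Delta\psi$; R4 $\phi\leftrightarrow\psi/\circ\phi\leftrightarrow\circ\psi$; MP. $\Gamma\vdash\phi$ means $\vdash(\gamma_1\land\dots\land\gamma_n)\to\phi$ for some finite subset of $\Gamma$. *)

theory Defs
  imports Main
begin

datatype 'p fm =
    Var 'p
  | Neg "'p fm"
  | Conj "'p fm" "'p fm"
  | Nabla "'p fm"
  | Bul "'p fm"

definition Imp :: "'p fm \<Rightarrow> 'p fm \<Rightarrow> 'p fm" where
  "Imp a b = Neg (Conj a (Neg b))"

definition Disj :: "'p fm \<Rightarrow> 'p fm \<Rightarrow> 'p fm" where
  "Disj a b = Neg (Conj (Neg a) (Neg b))"

definition Iff :: "'p fm \<Rightarrow> 'p fm \<Rightarrow> 'p fm" where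
  "Iff a b = Conj (Imp a b) (Imp b a)"

definition Delta :: "'p fm \<Rightarrow> 'p fm" where
  "Delta a = Neg (Nabla a)"

definition Circ :: "'p fm \<Rightarrow> 'p fm" where
  "Circ a = Neg (Bul a)"

section \<open>Propositional tautologies (modal subformulas treated as atoms)\<close>

fun peval :: "('p fm \<Rightarrow> bool) \<Rightarrow> 'p fm \<Rightarrow> bool" where
  "peval g (Var p) = g (Var p)"
| "peval g (Neg a) = (\<not> peval g a)"
| "peval g (Conj a b) = (peval g a \<and> peval g b)"
| "peval g (Nabla a) = g (Nabla a)"
| "peval g (Bul a) = g (Bul a)"

definition tautology :: "'p fm \<Rightarrow> bool" where
  "tautology a = (\<forall>g. peval g a)"

inductive kthm :: "'p fm \<Rightarrow> bool" where
  A0: "tautology a \<Longrightarrow> kthm a"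
| A1: "kthm (Imp (Bul a) a)"
| A2: "kthm (Iff (Nabla a) (Nabla (Neg a)))"
| A3: "kthm (Imp (Conj (Bul (Imp b a)) a) (Bul a))"
| A4: "kthm (Imp (Nabla (Conj a b)) (Disj (Nabla a) (Nabla b)))"
| A5: "kthm (Imp (Bul (Conj a b)) (Disj (Bul a) (Bul b)))"
| A6: "kthm (Imp (Nabla a) (Disj (Bul a) (Bul (Neg a))))"
| A7: "kthm (Imp (Conj (Bul (Imp a b)) (Bul (Imp (Neg a) c))) (Nabla a))"
| R1: "kthm a \<Longrightarrow> kthm (Delta a)"
| R2: "kthm a \<Longrightarrow> kthm (Circ a)"
| R3: "kthm (Iff a b) \<Longrightarrow> kthm (Iff (Delta a) (Delta b))"
| R4: "kthm (Iff a b) \<Longrightarrow> kthm (Iff (Circ a) (Circ b))"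
| MP: "kthm (Imp a b) \<Longrightarrow> kthm a \<Longrightarrow> kthm b"

fun conjs :: "'p fm list \<Rightarrow> 'p fm" where
  "conjs [] = undefined"
| "conjs [a] = a"
| "conjs (a # b # xs) = Conj a (conjs (b # xs))"

definition derives :: "'p fm set \<Rightarrow> 'p fm \<Rightarrow> bool" where
  "derives \<Gamma> a =
     (kthm a \<or> (\<exists>xs. xs \<noteq> [] \<and> set xs \<subseteq> \<Gamma> \<and> kthm (Imp (conjs xs) a)))"

definition is_model :: "'s set \<Rightarrow> ('s \<Rightarrow> 's \<Rightarrow> bool) \<Rightarrow> bool" where
  "is_model W R = (W \<noteq> {} \<and> (\<forall>s t. R s t \<longrightarrow> s \<in> W \<and> t \<in> W))"

definition serial :: "'s set \<Rightarrow> ('s \<Rightarrow> 's \<Rightarrow> bool) \<Rightarrow> bool" where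
  "serial W R = (\<forall>s\<in>W. \<exists>t\<in>W. R s t)"

fun sat :: "'s set \<Rightarrow> ('s \<Rightarrow> 's \<Rightarrow> bool) \<Rightarrow> ('p \<Rightarrow> 's set) \<Rightarrow> 's \<Rightarrow> 'p fm \<Rightarrow> bool" where
  "sat W R V s (Var p) = (s \<in> V p)"
| "sat W R V s (Neg a) = (\<not> sat W R V s a)"
| "sat W R V s (Conj a b) = (sat W R V s a \<and> sat W R V s b)"
| "sat W R V s (Nabla a) =
     (\<exists>t u. R s t \<and> R s u \<and> sat W R V t a \<and> \<not> sat W R V u a)"
| "sat W R V s (Bul a) = (sat W R V s a \<and> (\<exists>t. R s t \<and> \<not> sat W R V t a))"

text \<open>Semantic consequence over serial models whose states are drawn from the type 's.\<close>
definition serial_conseq :: "'s itself \<Rightarrow> 'p fm set \<Rightarrow> 'p fm \<Rightarrow> bool" where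
  "serial_conseq _ \<Gamma> a =
     (\<forall>(W::'s set) R (V::'p \<Rightarrow> 's set) s.
        is_model W R \<and> serial W R \<and> s \<in> W \<and> (\<forall>g\<in>\<Gamma>. sat W R V s g)
        \<longrightarrow> sat W R V s a)"

end

theory Submission
  imports Defs
begin

text \<open>Soundness is a routine induction on derivations; it holds on all frames. For
  completeness take the maximal consistent sets as states and let M see N iff N contains
  nec M: the formulas a with either \<open>a \<in> M, \<bullet>a \<notin> M\<close>, or \<open>a \<notin> M, \<bullet>\<not>a \<in> M, \<nabla>a \<notin> M\<close>.
  Axioms A3--A7 make nec M closed under provable implication and conjunction, so every
  formula outside nec M is refuted by some successor (Lindenbaum). Then \<open>\<nabla>a \<in> M\<close> iff
  neither a nor \<open>\<not>a\<close> lies in nec M, and \<open>\<bullet>a \<in> M\<close> iff \<open>a \<in> M\<close> but a is not in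
  nec M, which is the truth lemma for \<open>\<nabla>\<close> and \<open>\<bullet>\<close>. The canonical model is serial since
  \<open>\<circ>\<top>\<close> is a theorem, which keeps \<open>\<bottom>\<close> out of nec M.\<close>

lemma peval_sat: "peval (sat W R V s) a = sat W R V s a"
  by (induction a) auto

lemma kthm_valid: "kthm a \<Longrightarrow> sat W R V s a"
proof (induction a arbitrary: s rule: kthm.induct)
  case (A0 a)
  then show ?case using peval_sat[of W R V s a] by (simp add: tautology_def)
qed (auto simp: Imp_def Iff_def Disj_def Delta_def Circ_def)

definition Falsum :: "'p fm" where
  "Falsum = Conj (Var undefined) (Neg (Var undefined))"

fun Imps :: "'p fm list \<Rightarrow> 'p fm \<Rightarrow> 'p fm" where
  "Imps [] c = c"
| "Imps (x # xs) c = Imp x (Imps xs c)"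

lemma peval_Falsum [simp]: "\<not> peval g Falsum"
  by (simp add: Falsum_def)

lemma peval_Imp [simp]: "peval g (Imp a b) = (peval g a \<longrightarrow> peval g b)"
  by (simp add: Imp_def)

lemma peval_Disj [simp]: "peval g (Disj a b) = (peval g a \<or> peval g b)"
  by (simp add: Disj_def)

lemma peval_Iff [simp]: "peval g (Iff a b) = (peval g a \<longleftrightarrow> peval g b)"
  by (auto simp add: Iff_def)

lemma peval_Imps [simp]: "peval g (Imps xs c) = ((\<forall>x\<in>set xs. peval g x) \<longrightarrow> peval g c)"
  by (induction xs) auto

lemma peval_conjs: "xs \<noteq> [] \<Longrightarrow> peval g (conjs xs) = (\<forall>x\<in>set xs. peval g x)"
  by (induction xs rule: conjs.induct) auto

lemma kthm_Imps_MP: "kthm (Imps xs c) \<Longrightarrow> \<forall>x\<in>set xs. kthm x \<Longrightarrow> kthm c"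
  by (induction xs) (auto intro: kthm.MP)

lemma kthm_tautology_rule:
  assumes "\<forall>p\<in>set ps. kthm p" and "\<And>g. \<forall>p\<in>set ps. peval g p \<Longrightarrow> peval g c"
  shows "kthm c"
proof -
  have "tautology (Imps ps c)" using assms(2) by (simp add: tautology_def)
  then show ?thesis using kthm.A0 kthm_Imps_MP assms(1) by blast
qed

lemma not_kthm_Falsum: "\<not> kthm Falsum"
  using kthm_valid[of Falsum "{}::unit set" "\<lambda>_ _. False" "\<lambda>_. {}" "()"]
  by (auto simp: Falsum_def)

section \<open>Maximal consistent sets\<close>

definition consistent :: "'p fm set \<Rightarrow> bool" where
  "consistent S = (\<forall>xs. set xs \<subseteq> S \<longrightarrow> \<not> kthm (Imps xs Falsum))"

definition mcs :: "'p fm set \<Rightarrow> bool" where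
  "mcs M = (consistent M \<and> (\<forall>a. a \<in> M \<or> Neg a \<in> M))"

lemma inconsistent_insert:
  assumes "\<not> consistent (insert a S)"
  obtains ys where "set ys \<subseteq> S" and "kthm (Imps ys (Neg a))"
proof -
  obtain xs where xs: "set xs \<subseteq> insert a S" "kthm (Imps xs Falsum)"
    using assms by (auto simp: consistent_def)
  let ?ys = "filter (\<lambda>x. x \<noteq> a) xs"
  have "kthm (Imps ?ys (Neg a))"
  proof (rule kthm_tautology_rule[of "[Imps xs Falsum]"])
    fix g assume "\<forall>p\<in>set [Imps xs Falsum]. peval g p"
    then show "peval g (Imps ?ys (Neg a))" by auto
  qed (use xs in simp)
  moreover have "set ?ys \<subseteq> S" using xs by auto
  ultimately show thesis using that by blast
qed

lemma lindenbaum: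
  assumes "consistent S"
  obtains M where "S \<subseteq> M" and "mcs M"
proof -
  let ?A = "{T. S \<subseteq> T \<and> consistent T}"
  have "\<exists>M\<in>?A. \<forall>T\<in>?A. M \<subseteq> T \<longrightarrow> T = M"
  proof (rule subset_Zorn_nonempty)
    fix C assume C: "C \<noteq> {}" "subset.chain ?A C"
    have "consistent (\<Union>C)" unfolding consistent_def
    proof (intro allI impI)
      fix xs assume "set xs \<subseteq> \<Union>C"
      then obtain T where "T \<in> C" "set xs \<subseteq> T"
        using finite_subset_Union_chain[OF _ _ C] by blast
      then show "\<not> kthm (Imps xs Falsum)" using C(2) by (auto simp: consistent_def subset_chain_def)
    qed
    moreover obtain T where "T \<in> C" using C(1) by blast
    then have "S \<subseteq> \<Union>C" using C(2) by (auto simp: subset_chain_def)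
    ultimately show "\<Union>C \<in> ?A" by blast
  qed (use assms in blast)
  then obtain M where M: "S \<subseteq> M" "consistent M"
    and maximal: "\<forall>T\<in>?A. M \<subseteq> T \<longrightarrow> T = M"
    by blast
  have "a \<in> M \<or> Neg a \<in> M" for a
  proof (rule ccontr)
    assume "\<not> (a \<in> M \<or> Neg a \<in> M)"
    then have "insert a M \<notin> ?A" "insert (Neg a) M \<notin> ?A"
      using maximal by blast+
    then have "\<not> consistent (insert a M)" "\<not> consistent (insert (Neg a) M)"
      using M(1) by blast+
    then obtain ys zs where ys: "set ys \<subseteq> M" "kthm (Imps ys (Neg a))"
      and zs: "set zs \<subseteq> M" "kthm (Imps zs (Neg (Neg a)))"
      by (elim inconsistent_insert)
    have "kthm (Imps (ys @ zs) Falsum)"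
      by (rule kthm_tautology_rule[of "[Imps ys (Neg a), Imps zs (Neg (Neg a))]"])
        (use ys zs in auto)
    then show False using M(2) ys zs by (auto simp: consistent_def)
  qed
  then show thesis using that M by (simp add: mcs_def)
qed

lemma mcs_tautology_rule:
  assumes "mcs M" and "set xs \<subseteq> M" and "\<forall>p\<in>set ps. kthm p"
    and "\<And>g. \<forall>p\<in>set ps. peval g p \<Longrightarrow> \<forall>x\<in>set xs. peval g x \<Longrightarrow> peval g c"
  shows "c \<in> M"
proof (rule ccontr)
  assume "c \<notin> M"
  then have "set (Neg c # xs) \<subseteq> M" using assms(1,2) by (auto simp: mcs_def)
  moreover have "kthm (Imps (Neg c # xs) Falsum)"
  proof (rule kthm_tautology_rule[of ps])
    fix g assume "\<forall>p\<in>set ps. peval g p"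
    then show "peval g (Imps (Neg c # xs) Falsum)" using assms(4)[of g] by auto
  qed (fact assms(3))
  ultimately show False using assms(1) unfolding mcs_def consistent_def by blast
qed

lemma mcs_Falsum: "mcs M \<Longrightarrow> Falsum \<notin> M"
proof
  assume "mcs M" "Falsum \<in> M"
  have "kthm (Imps [Falsum] Falsum)" by (rule kthm_tautology_rule[of "[]"]) auto
  then show False using \<open>mcs M\<close> \<open>Falsum \<in> M\<close> unfolding mcs_def consistent_def
    by (metis empty_set empty_subsetI insert_subset list.simps(15))
qed

lemma mcs_Neg: assumes "mcs M" shows "(Neg a \<in> M) = (a \<notin> M)"
proof
  assume "Neg a \<in> M"
  show "a \<notin> M"
  proof
    assume "a \<in> M"
    have "Falsum \<in> M"
      by (rule mcs_tautology_rule[of M "[a, Neg a]" "[]"]) (use assms \<open>a \<in> M\<close> \<open>Neg a \<in> M\<close> in auto)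
    then show False using mcs_Falsum assms by blast
  qed
qed (use assms in \<open>auto simp: mcs_def\<close>)

lemma mcs_Conj: assumes "mcs M" shows "(Conj a b \<in> M) = (a \<in> M \<and> b \<in> M)"
proof
  assume "Conj a b \<in> M"
  then show "a \<in> M \<and> b \<in> M"
    using mcs_tautology_rule[OF assms, of "[Conj a b]" "[]"] by force
next
  assume "a \<in> M \<and> b \<in> M"
  then show "Conj a b \<in> M"
    by (intro mcs_tautology_rule[OF assms, of "[a, b]" "[]"]) auto
qed

lemma mcs_Disj: "mcs M \<Longrightarrow> (Disj a b \<in> M) = (a \<in> M \<or> b \<in> M)"
  by (simp add: Disj_def mcs_Neg mcs_Conj)

lemma mcs_kthm: "mcs M \<Longrightarrow> kthm a \<Longrightarrow> a \<in> M"
  by (rule mcs_tautology_rule[of M "[]" "[a]"]) auto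

lemma mcs_MP: "mcs M \<Longrightarrow> kthm (Imp a b) \<Longrightarrow> a \<in> M \<Longrightarrow> b \<in> M"
  by (rule mcs_tautology_rule[of M "[a]" "[Imp a b]"]) auto

lemma mcs_Iff: assumes "mcs M" "kthm (Iff a b)" shows "(a \<in> M) = (b \<in> M)"
proof
  show "b \<in> M" if "a \<in> M"
    by (rule mcs_tautology_rule[of M "[a]" "[Iff a b]"]) (use assms that in auto)
  show "a \<in> M" if "b \<in> M"
    by (rule mcs_tautology_rule[of M "[b]" "[Iff a b]"]) (use assms that in auto)
qed

lemma mcs_Bul_cong: "mcs M \<Longrightarrow> kthm (Iff a b) \<Longrightarrow> (Bul a \<in> M) = (Bul b \<in> M)"
  using mcs_Iff[of M "Circ a" "Circ b"] kthm.R4[of a b] by (simp add: Circ_def mcs_Neg)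

lemma mcs_Nabla_cong: "mcs M \<Longrightarrow> kthm (Iff a b) \<Longrightarrow> (Nabla a \<in> M) = (Nabla b \<in> M)"
  using mcs_Iff[of M "Delta a" "Delta b"] kthm.R3[of a b] by (simp add: Delta_def mcs_Neg)

lemma mcs_Bul_cong_taut:
  assumes "mcs M" "\<And>g. peval g a = peval g b" shows "(Bul a \<in> M) = (Bul b \<in> M)"
  using assms by (intro mcs_Bul_cong kthm_tautology_rule[of "[]"]) auto

lemma mcs_BulD: "mcs M \<Longrightarrow> Bul a \<in> M \<Longrightarrow> a \<in> M"
  using mcs_MP kthm.A1 by blast

lemma mcs_Nabla_Neg: "mcs M \<Longrightarrow> (Nabla (Neg a) \<in> M) = (Nabla a \<in> M)"
  using mcs_Iff kthm.A2 by blast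

lemma mcs_BulI: "mcs M \<Longrightarrow> Bul (Imp b a) \<in> M \<Longrightarrow> a \<in> M \<Longrightarrow> Bul a \<in> M"
  using mcs_MP[OF _ kthm.A3[of b a]] mcs_Conj by blast

lemma mcs_Nabla_Conj: "mcs M \<Longrightarrow> Nabla (Conj a b) \<in> M \<Longrightarrow> Nabla a \<in> M \<or> Nabla b \<in> M"
  using mcs_MP[OF _ kthm.A4[of a b]] mcs_Disj by blast

lemma mcs_Bul_Conj: "mcs M \<Longrightarrow> Bul (Conj a b) \<in> M \<Longrightarrow> Bul a \<in> M \<or> Bul b \<in> M"
  using mcs_MP[OF _ kthm.A5[of a b]] mcs_Disj by blast

lemma mcs_Nabla_imp_Bul: "mcs M \<Longrightarrow> Nabla a \<in> M \<Longrightarrow> a \<in> M \<Longrightarrow> Bul a \<in> M"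
  using mcs_MP[OF _ kthm.A6[of a]] mcs_Disj mcs_BulD mcs_Neg by blast

lemma mcs_NablaI: "mcs M \<Longrightarrow> Bul (Imp a b) \<in> M \<Longrightarrow> Bul (Imp (Neg a) c) \<in> M \<Longrightarrow> Nabla a \<in> M"
  using mcs_MP[OF _ kthm.A7[of a b c]] mcs_Conj by blast

lemma mcs_Bul_antimono:
  assumes "mcs M" "kthm (Imp a b)" "a \<in> M" "Bul b \<in> M" shows "Bul a \<in> M"
proof -
  have "kthm (Iff b (Imp (Neg b) a))"
    by (rule kthm_tautology_rule[of "[Imp a b]"]) (use assms(2) in auto)
  then have "Bul (Imp (Neg b) a) \<in> M" using mcs_Bul_cong assms(1,4) by blast
  then show ?thesis using mcs_BulI assms(1,3) by blast
qed

lemma mcs_Nabla_of_Bul: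
  assumes "mcs M" "kthm (Imp a b)" "Bul (Neg a) \<in> M" "Bul b \<in> M" shows "Nabla a \<in> M"
proof -
  have "Bul (Imp a Falsum) \<in> M" using mcs_Bul_cong_taut[of M "Imp a Falsum" "Neg a"] assms by auto
  moreover have "kthm (Iff b (Imp (Neg a) b))"
    by (rule kthm_tautology_rule[of "[Imp a b]"]) (use assms(2) in auto)
  then have "Bul (Imp (Neg a) b) \<in> M" using mcs_Bul_cong assms(1,4) by blast
  ultimately show ?thesis using mcs_NablaI assms(1) by blast
qed

section \<open>The successor set of a maximal consistent set\<close>

text \<open>The formulas true at every canonical successor of M. If a holds at M, then
  \<open>\<not>\<bullet>a\<close> says no successor refutes it; if a fails at M, then \<open>\<bullet>\<not>a\<close> provides a
  successor where a holds and \<open>\<not>\<nabla>a\<close> spreads this to all successors.\<close>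
definition nec :: "'p fm set \<Rightarrow> 'p fm set" where
  "nec M = {a. (a \<in> M \<and> Bul a \<notin> M) \<or> (a \<notin> M \<and> Bul (Neg a) \<in> M \<and> Nabla a \<notin> M)}"

lemma mcs_Bul_iff_nec: "mcs M \<Longrightarrow> (Bul a \<in> M) = (a \<in> M \<and> a \<notin> nec M)"
  using mcs_BulD by (auto simp: nec_def)

lemma mcs_Nabla_iff_nec:
  assumes "mcs M" shows "(Nabla a \<in> M) = (a \<notin> nec M \<and> Neg a \<notin> nec M)"
proof -
  have "(Bul (Neg (Neg a)) \<in> M) = (Bul a \<in> M)"
    by (rule mcs_Bul_cong_taut[OF assms]) simp
  then show ?thesis
    using assms mcs_Nabla_Neg[OF assms] mcs_Nabla_imp_Bul[of M a] mcs_Nabla_imp_Bul[of M "Neg a"]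
    by (cases "a \<in> M") (auto simp: nec_def mcs_Neg)
qed

lemma nec_kthm: "mcs M \<Longrightarrow> kthm a \<Longrightarrow> a \<in> nec M"
  using mcs_kthm[of M "Circ a"] kthm.R2[of a] mcs_kthm[of M a]
  by (auto simp: nec_def Circ_def mcs_Neg)

lemma mcs_Nabla_transfer:
  assumes M: "mcs M" and ab: "kthm (Imp a b)"
    and "b \<notin> M" "Bul (Neg a) \<in> M" "Nabla b \<in> M"
  shows "Nabla a \<in> M"
proof -
  let ?d = "Disj a (Neg b)"
  have "kthm (Iff (Neg b) (Conj (Neg a) ?d))"
    by (rule kthm_tautology_rule[of "[Imp a b]"]) (use ab in auto)
  then have "Nabla (Conj (Neg a) ?d) \<in> M"
    using mcs_Nabla_cong mcs_Nabla_Neg assms by blast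
  then consider "Nabla (Neg a) \<in> M" | "Nabla ?d \<in> M" using mcs_Nabla_Conj M by blast
  then show ?thesis
  proof cases
    case 2
    moreover have "?d \<in> M" using assms mcs_Disj mcs_Neg by blast
    ultimately have "Bul ?d \<in> M" using mcs_Nabla_imp_Bul M by blast
    moreover have "kthm (Imp a ?d)" by (rule kthm_tautology_rule[of "[]"]) auto
    ultimately show ?thesis using mcs_Nabla_of_Bul assms by blast
  qed (use mcs_Nabla_Neg M in blast)
qed

lemma nec_mono:
  assumes M: "mcs M" and ab: "kthm (Imp a b)" and a: "a \<in> nec M" shows "b \<in> nec M"
proof (cases "a \<in> M")
  case True
  then have "Bul b \<notin> M" using a mcs_Bul_antimono[OF M ab] by (auto simp: nec_def)
  moreover have "b \<in> M" using True ab M mcs_MP by blast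
  ultimately show ?thesis by (simp add: nec_def)
next
  case False
  then have a': "Bul (Neg a) \<in> M" "Nabla a \<notin> M" using a by (auto simp: nec_def)
  show ?thesis
  proof (cases "b \<in> M")
    case True
    then show ?thesis using mcs_Nabla_of_Bul[OF M ab] a' by (auto simp: nec_def)
  next
    case False
    have "kthm (Imp (Neg b) (Neg a))" by (rule kthm_tautology_rule[of "[Imp a b]"]) (use ab in auto)
    then have "Bul (Neg b) \<in> M" using mcs_Bul_antimono[OF M] False a' M mcs_Neg by blast
    moreover have "Nabla b \<notin> M" using mcs_Nabla_transfer[OF M ab False] a' by blast
    ultimately show ?thesis using False by (simp add: nec_def)
  qed
qed

lemma nec_Conj_of_mem:
  assumes M: "mcs M" and a: "a \<in> nec M" "a \<in> M" and b: "b \<in> nec M"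
  shows "Conj a b \<in> nec M"
proof -
  have not_Bul_a: "Bul a \<notin> M" using a by (auto simp: nec_def)
  show ?thesis
  proof (cases "b \<in> M")
    case True
    then have "Bul (Conj a b) \<notin> M" using b not_Bul_a mcs_Bul_Conj M by (auto simp: nec_def)
    then show ?thesis using True a M by (simp add: nec_def mcs_Conj)
  next
    case False
    then have b': "Bul (Neg b) \<in> M" "Nabla b \<notin> M" using b by (auto simp: nec_def)
    have "Nabla a \<notin> M" using mcs_Nabla_imp_Bul M a not_Bul_a by blast
    then have "Nabla (Conj a b) \<notin> M" using mcs_Nabla_Conj M b' by blast
    moreover have "Bul (Neg (Conj a b)) \<in> M"
    proof -
      let ?d = "Disj a (Neg b)"
      have "(Bul (Conj (Neg (Conj a b)) ?d) \<in> M) = (Bul (Neg b) \<in> M)"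
        by (rule mcs_Bul_cong_taut[OF M]) auto
      then have "Bul (Conj (Neg (Conj a b)) ?d) \<in> M" using b' by blast
      moreover have "kthm (Imp a ?d)" by (rule kthm_tautology_rule[of "[]"]) auto
      then have "Bul ?d \<notin> M" using mcs_Bul_antimono M a not_Bul_a by blast
      ultimately show ?thesis using mcs_Bul_Conj M by blast
    qed
    ultimately show ?thesis using False M by (simp add: nec_def mcs_Conj)
  qed
qed

lemma nec_Conj:
  assumes M: "mcs M" and a: "a \<in> nec M" and b: "b \<in> nec M" shows "Conj a b \<in> nec M"
proof -
  consider "a \<in> M" | "b \<in> M" | "a \<notin> M" "b \<notin> M" by blast
  then show ?thesis
  proof cases
    case 2
    then have "Conj b a \<in> nec M" using nec_Conj_of_mem M a b by blast
    moreover have "kthm (Imp (Conj b a) (Conj a b))" by (rule kthm_tautology_rule[of "[]"]) auto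
    ultimately show ?thesis using nec_mono M by blast
  next
    case 3
    then have a': "Bul (Neg a) \<in> M" "Nabla a \<notin> M" and b': "Nabla b \<notin> M"
      using a b by (auto simp: nec_def)
    have "Nabla (Conj a b) \<notin> M" using mcs_Nabla_Conj M a' b' by blast
    moreover have "Bul (Neg (Conj a b)) \<in> M"
    proof -
      let ?d = "Disj (Neg a) b"
      have "(Bul (Conj (Neg (Conj a b)) ?d) \<in> M) = (Bul (Neg a) \<in> M)"
        by (rule mcs_Bul_cong_taut[OF M]) auto
      then have "Bul (Conj (Neg (Conj a b)) ?d) \<in> M" using a' by blast
      moreover have "kthm (Imp b ?d)" by (rule kthm_tautology_rule[of "[]"]) auto
      then have "Bul ?d \<notin> M" using nec_mono M b mcs_Bul_iff_nec by blast
      ultimately show ?thesis using mcs_Bul_Conj M by blast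
    qed
    ultimately show ?thesis using 3 M by (simp add: nec_def mcs_Conj)
  qed (use nec_Conj_of_mem assms in blast)
qed

lemma nec_Imps: "mcs M \<Longrightarrow> set ys \<subseteq> nec M \<Longrightarrow> kthm (Imps ys c) \<Longrightarrow> c \<in> nec M"
proof (induction ys arbitrary: c)
  case Nil
  then show ?case using nec_kthm by simp
next
  case (Cons y ys)
  have "kthm (Imps ys (Imp y c))"
    by (rule kthm_tautology_rule[of "[Imps (y # ys) c]"]) (use Cons.prems in auto)
  then have "Imp y c \<in> nec M" using Cons by simp
  then have "Conj y (Imp y c) \<in> nec M" using Cons.prems nec_Conj by auto
  moreover have "kthm (Imp (Conj y (Imp y c)) c)" by (rule kthm_tautology_rule[of "[]"]) auto
  ultimately show ?case using nec_mono Cons.prems by blast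
qed

lemma ex_mcs_refuting_iff_not_nec:
  assumes M: "mcs M" shows "(\<exists>u. mcs u \<and> nec M \<subseteq> u \<and> a \<notin> u) = (a \<notin> nec M)"
proof
  assume a: "a \<notin> nec M"
  have "consistent (insert (Neg a) (nec M))"
  proof (rule ccontr)
    assume "\<not> consistent (insert (Neg a) (nec M))"
    then obtain ys where "set ys \<subseteq> nec M" "kthm (Imps ys (Neg (Neg a)))"
      by (elim inconsistent_insert)
    moreover have "kthm (Imps ys a)" if "kthm (Imps ys (Neg (Neg a)))"
      by (rule kthm_tautology_rule[of "[Imps ys (Neg (Neg a))]"]) (use that in auto)
    ultimately show False using nec_Imps M a by blast
  qed
  then obtain u where "insert (Neg a) (nec M) \<subseteq> u" "mcs u" by (elim lindenbaum)
  then show "\<exists>u. mcs u \<and> nec M \<subseteq> u \<and> a \<notin> u" using mcs_Neg by blast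
qed blast

section \<open>The canonical model\<close>

text \<open>States are singletons {M} only because the state type is fixed to \<open>'p fm set set\<close>.\<close>
definition canon_states :: "'p fm set set set" where
  "canon_states = {{M} | M. mcs M}"

definition canon_rel :: "'p fm set set \<Rightarrow> 'p fm set set \<Rightarrow> bool" where
  "canon_rel x y = (\<exists>M N. x = {M} \<and> y = {N} \<and> mcs M \<and> mcs N \<and> nec M \<subseteq> N)"

definition canon_val :: "'p \<Rightarrow> 'p fm set set set" where
  "canon_val p = {{M} | M. mcs M \<and> Var p \<in> M}"

abbreviation canon_sat :: "'p fm set set \<Rightarrow> 'p fm \<Rightarrow> bool" where
  "canon_sat \<equiv> sat canon_states canon_rel canon_val"

lemma ex_canon_successor:
  "mcs M \<Longrightarrow> (\<exists>y. canon_rel {M} y \<and> P y) = (\<exists>N. mcs N \<and> nec M \<subseteq> N \<and> P {N})"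
  by (auto simp: canon_rel_def)

lemma truth_lemma: "mcs M \<Longrightarrow> canon_sat {M} a = (a \<in> M)"
proof (induction a arbitrary: M)
  case (Var p)
  then show ?case by (auto simp: canon_val_def)
next
  case (Neg a)
  then show ?case by (simp add: mcs_Neg)
next
  case (Conj a b)
  then show ?case by (simp add: mcs_Conj)
next
  case (Nabla a)
  have "canon_sat {M} (Nabla a) =
    ((\<exists>y. canon_rel {M} y \<and> canon_sat y a) \<and> (\<exists>y. canon_rel {M} y \<and> \<not> canon_sat y a))"
    by auto
  also have "\<dots> =
    ((\<exists>N. mcs N \<and> nec M \<subseteq> N \<and> Neg a \<notin> N) \<and> (\<exists>N. mcs N \<and> nec M \<subseteq> N \<and> a \<notin> N))"
    using Nabla.IH mcs_Neg by (simp add: ex_canon_successor[OF Nabla.prems]) blast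
  also have "\<dots> = (Neg a \<notin> nec M \<and> a \<notin> nec M)"
    by (simp only: ex_mcs_refuting_iff_not_nec[OF Nabla.prems])
  also have "\<dots> = (Nabla a \<in> M)"
    using mcs_Nabla_iff_nec[OF Nabla.prems] by blast
  finally show ?case .
next
  case (Bul a)
  have "canon_sat {M} (Bul a) = (a \<in> M \<and> (\<exists>N. mcs N \<and> nec M \<subseteq> N \<and> a \<notin> N))"
    using Bul.IH Bul.prems by (simp add: ex_canon_successor[OF Bul.prems]) blast
  then show ?case
    by (simp add: ex_mcs_refuting_iff_not_nec[OF Bul.prems] mcs_Bul_iff_nec[OF Bul.prems])
qed

lemma canon_model: "is_model (canon_states :: 'p fm set set set) canon_rel"
  unfolding is_model_def
proof
  have "consistent ({} :: 'p fm set)"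
    using not_kthm_Falsum by (simp add: consistent_def)
  then obtain M :: "'p fm set" where "mcs M" using lindenbaum by blast
  then show "(canon_states :: 'p fm set set set) \<noteq> {}" unfolding canon_states_def by blast
  show "\<forall>x y. canon_rel x y \<longrightarrow> x \<in> canon_states \<and> y \<in> canon_states"
    unfolding canon_rel_def canon_states_def by blast
qed

lemma canon_serial: "serial canon_states canon_rel"
  unfolding serial_def
proof
  fix x assume "x \<in> canon_states"
  then obtain M where M: "x = {M}" "mcs M" unfolding canon_states_def by blast
  have "kthm (Neg Falsum)" by (rule kthm_tautology_rule[of "[]"]) auto
  then have "Falsum \<notin> nec M"
    using nec_kthm[OF M(2)] mcs_Falsum[OF M(2)] mcs_Neg[OF M(2)] by (auto simp: nec_def)
  then obtain N where N: "mcs N" "nec M \<subseteq> N"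
    using ex_mcs_refuting_iff_not_nec[OF M(2)] by blast
  then have "{N} \<in> canon_states" unfolding canon_states_def by blast
  moreover have "canon_rel x {N}" unfolding canon_rel_def using M N by blast
  ultimately show "\<exists>y\<in>canon_states. canon_rel x y" by blast
qed

lemma sat_conjs: "xs \<noteq> [] \<Longrightarrow> sat W R V s (conjs xs) = (\<forall>x\<in>set xs. sat W R V s x)"
  by (induction xs rule: conjs.induct) auto

lemma soundness: "derives \<Gamma> \<phi> \<Longrightarrow> serial_conseq TYPE('s) \<Gamma> \<phi>"
  unfolding serial_conseq_def
proof (intro allI impI)
  fix W :: "'s set" and R V s
  assume "derives \<Gamma> \<phi>" and "is_model W R \<and> serial W R \<and> s \<in> W \<and> (\<forall>g\<in>\<Gamma>. sat W R V s g)"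
  then have \<Gamma>: "\<forall>g\<in>\<Gamma>. sat W R V s g" by blast
  consider "kthm \<phi>" | xs where "xs \<noteq> []" "set xs \<subseteq> \<Gamma>" "kthm (Imp (conjs xs) \<phi>)"
    using \<open>derives \<Gamma> \<phi>\<close> unfolding derives_def by blast
  then show "sat W R V s \<phi>"
  proof cases
    case 2
    then have "sat W R V s (conjs xs)" using \<Gamma> by (auto simp: sat_conjs)
    then show ?thesis using kthm_valid[OF 2(3), of W R V s] by (simp add: Imp_def)
  qed (rule kthm_valid)
qed

lemma consistent_if_not_derives:
  assumes "\<not> derives \<Gamma> \<phi>" shows "consistent (insert (Neg \<phi>) \<Gamma>)"
proof (rule ccontr)
  assume "\<not> consistent (insert (Neg \<phi>) \<Gamma>)"
  then obtain ys where ys: "set ys \<subseteq> \<Gamma>" "kthm (Imps ys (Neg (Neg \<phi>)))"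
    by (elim inconsistent_insert)
  show False
  proof (cases "ys = []")
    case True
    have "kthm \<phi>"
      by (rule kthm_tautology_rule[of "[Imps ys (Neg (Neg \<phi>))]"]) (use True ys in auto)
    then show False using assms by (simp add: derives_def)
  next
    case False
    have "kthm (Imp (conjs ys) \<phi>)"
      by (rule kthm_tautology_rule[of "[Imps ys (Neg (Neg \<phi>))]"])
        (use False ys in \<open>auto simp: peval_conjs\<close>)
    then show False using assms ys False by (auto simp: derives_def)
  qed
qed

lemma completeness:
  assumes "serial_conseq TYPE('p fm set set) \<Gamma> (\<phi> :: 'p fm)" shows "derives \<Gamma> \<phi>"
proof (rule ccontr)
  assume "\<not> derives \<Gamma> \<phi>"
  then obtain M where M: "insert (Neg \<phi>) \<Gamma> \<subseteq> M" "mcs M"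
    using lindenbaum[OF consistent_if_not_derives] by blast
  have "{M} \<in> canon_states" using M(2) unfolding canon_states_def by blast
  moreover have "\<forall>g\<in>\<Gamma>. canon_sat {M} g" using M truth_lemma by blast
  ultimately have "canon_sat {M} \<phi>"
    using assms canon_model canon_serial unfolding serial_conseq_def by blast
  then show False using M truth_lemma[OF M(2)] mcs_Neg[OF M(2)] by blast
qed

theorem theorem2:
  fixes \<Gamma> :: "'p fm set" and \<phi> :: "'p fm"
  shows "(derives \<Gamma> \<phi> \<longleftrightarrow> serial_conseq TYPE('p fm set set) \<Gamma> \<phi>)
         \<and> (derives \<Gamma> \<phi> \<longrightarrow> serial_conseq TYPE('s) \<Gamma> \<phi>)"
  by (intro conjI iffI impI) (erule soundness, erule completeness, erule soundness)

end
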